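(* For integers $m\ge1$, $0\le p\le m$ and real $c\ge0$, with $P_{c,p}(m)$ as defined in the context, $$P_{c,p}(m)=\int_{\mathbb R_+^m}\Big(\prod_{1\le i\le j\le m}\ \sum_{k=i}^j\lambda_k\Big)\exp\Big(-\sum_{j=1}^p j\lambda_j-\sum_{j=p+1}^m(j+c)\lambda_j\Big)\,d\lambda .$$
   Context: $$P_{c,p}(m)=\int_{Y_p}\Big|\prod_{j=1}^m\lambda_j\Big|\,\Delta(\lambda)\,e^{-\sum_{j=1}^{m-1}\lambda_j}\,G_{c,p}(\lambda_m)\,d\lambda,\qquad G_{c,p}(\lambda_m)=\begin{cases}e^{(m+c)\lambda_m},&p<m,\\ e^{-\lambda_m},&p=m,\end{cases}$$ where $Y_p=\{\lambda\in\mathbb R^m:\lambda_1>\dots>\lambda_p>0>\lambda_{p+1}>\dots>\lambda_m\}$, $\Delta(\lambda)=\prod_{1\le i<j\le m}(\lambda_i-\lambda_j)$, and $\mathbb R_+=(0,\infty)$. *)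

theory Defs
  imports "HOL-Analysis.Analysis"
begin

text \<open>Points of R^m are functions on the index set {1..m} (extensional), with
  Lebesgue measure given as the product measure of m copies of lborel.\<close>

definition leb_m :: "nat \<Rightarrow> (nat \<Rightarrow> real) measure" where
  "leb_m m = PiM {1..m} (\<lambda>_. lborel)"

definition Ychamber :: "nat \<Rightarrow> nat \<Rightarrow> (nat \<Rightarrow> real) set" where
  "Ychamber m p = {l \<in> PiE {1..m} (\<lambda>_. UNIV).
      (\<forall>i. 1 \<le> i \<and> i < m \<longrightarrow> l (Suc i) < l i) \<and>
      (\<forall>i. 1 \<le> i \<and> i \<le> p \<longrightarrow> 0 < l i) \<and>
      (\<forall>i. p < i \<and> i \<le> m \<longrightarrow> l i < 0)}"

definition vdm :: "nat \<Rightarrow> (nat \<Rightarrow> real) \<Rightarrow> real" where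
  "vdm m l = (\<Prod>i\<in>{1..m}. \<Prod>j\<in>{i<..m}. (l i - l j))"

definition Gfun :: "real \<Rightarrow> nat \<Rightarrow> nat \<Rightarrow> real \<Rightarrow> real" where
  "Gfun c p m x = (if p < m then exp ((real m + c) * x) else exp (- x))"

definition Pcp :: "real \<Rightarrow> nat \<Rightarrow> nat \<Rightarrow> real" where
  "Pcp c p m = (LINT l : Ychamber m p | leb_m m.
      \<bar>\<Prod>j\<in>{1..m}. l j\<bar> * vdm m l * exp (- (\<Sum>j\<in>{1..m-1}. l j)) * Gfun c p m (l m))"

end

theory Submission
  imports Defs
begin

text \<open>Describe a point of \<open>Y\<^sub>p\<close> by the consecutive gaps \<open>v\<^sub>1, \<dots>, v\<^sub>m > 0\<close> of the decreasing sequence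
  \<open>\<lambda>\<^sub>1 > \<dots> > \<lambda>\<^sub>p > 0 > \<lambda>\<^sub>p\<^sub>+\<^sub>1 > \<dots> > \<lambda>\<^sub>m\<close>, i.e. \<open>\<lambda>\<^sub>k = v\<^sub>k + \<dots> + v\<^sub>p\<close> for \<open>k \<le> p\<close> and
  \<open>\<lambda>\<^sub>k = -(v\<^sub>p\<^sub>+\<^sub>1 + \<dots> + v\<^sub>k)\<close> for \<open>k > p\<close>. This linear substitution is triangular with diagonal
  entries \<open>\<plusminus>1\<close> for a suitable ordering of the coordinates, so it preserves Lebesgue measure, and it
  maps the positive orthant onto \<open>Y\<^sub>p\<close>. After adjoining the point \<open>0\<close>, \<open>|\<Prod>\<lambda>\<^sub>j| \<Delta>(\<lambda>)\<close> is the product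
  of all distances between the \<open>m + 1\<close> points, and consecutive points are exactly the gaps apart,
  which gives the product of interval sums; the exponent is linear in \<open>\<lambda>\<close> and transforms directly.\<close>

abbreviation lborel_Pi :: "'i set \<Rightarrow> ('i \<Rightarrow> real) measure" where
  "lborel_Pi I \<equiv> Pi\<^sub>M I (\<lambda>_. lborel)"

interpretation lborel_product: product_sigma_finite "\<lambda>_::'i. lborel :: real measure"
  by standard

lemma sigma_finite_lborel_Pi:
  assumes "finite I" shows "sigma_finite_measure (lborel_Pi I)"
proof -
  interpret finite_product_sigma_finite "\<lambda>_. lborel :: real measure" I by standard fact
  show ?thesis by (rule sigma_finite_measure_axioms)
qed

lemma distr_lborel_Pi_insert:
  fixes I :: "'i set"
  assumes fin: "finite I" and a: "a \<notin> I"
  shows "distr (lborel_Pi I \<Otimes>\<^sub>M lborel) (lborel_Pi (insert a I)) (\<lambda>(f, y). f(a := y))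
    = lborel_Pi (insert a I)"
proof (rule lborel_product.PiM_eqI)
  interpret I: finite_product_sigma_finite "\<lambda>_. lborel :: real measure" I by standard fact
  fix A :: "'i \<Rightarrow> real set" assume A: "\<And>i. i \<in> insert a I \<Longrightarrow> A i \<in> sets lborel"
  have *: "(\<lambda>(f, y). f(a := y)) -` Pi\<^sub>E (insert a I) A \<inter> space (lborel_Pi I \<Otimes>\<^sub>M lborel)
      = Pi\<^sub>E I A \<times> A a"
    using a by (auto simp: space_PiM space_pair_measure PiE_def Pi_def extensional_def split: if_splits)
  show "emeasure (distr (lborel_Pi I \<Otimes>\<^sub>M lborel) (lborel_Pi (insert a I)) (\<lambda>(f, y). f(a := y)))
      (Pi\<^sub>E (insert a I) A) = (\<Prod>i\<in>insert a I. emeasure lborel (A i))"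
    using A fin a
    by (subst emeasure_distr)
       (auto simp: * lborel.emeasure_pair_measure_Times I.measure_times mult.commute intro!: sets_PiM_I_finite)
qed (use fin in simp_all)

text \<open>Fibrewise, the shear is an affine map of slope \<open>\<plusminus>1\<close> on the real line.\<close>
lemma distr_pair_lborel_shear:
  fixes s :: real
  assumes N: "sigma_finite_measure N" and h[measurable]: "h \<in> borel_measurable N" and s: "\<bar>s\<bar> = 1"
  shows "distr (N \<Otimes>\<^sub>M lborel) (N \<Otimes>\<^sub>M lborel) (\<lambda>(f, y). (f, s * y + h f)) = N \<Otimes>\<^sub>M lborel"
    (is "distr ?Q ?Q ?S = ?Q")
proof (rule measure_eqI)
  interpret N: sigma_finite_measure N by fact
  have S: "?S \<in> measurable ?Q ?Q" by measurable
  have affine: "distr lborel borel (\<lambda>y. t + s * y) = (lborel :: real measure)" for t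
    using s by (metis abs_0 density_1 ennreal_1 lborel_real_affine zero_neq_one)
  fix A assume "A \<in> sets (distr ?Q ?Q ?S)"
  then have A: "A \<in> sets ?Q" by simp
  have fibre: "emeasure lborel (Pair f -` (?S -` A \<inter> space ?Q)) = emeasure lborel (Pair f -` A)"
    if f: "f \<in> space N" for f
  proof -
    have "Pair f -` A \<in> sets borel" using A by (auto intro: sets_Pair1)
    then have "emeasure lborel (Pair f -` A) = emeasure (distr lborel borel (\<lambda>y. h f + s * y)) (Pair f -` A)"
      by (simp only: affine)
    also have "\<dots> = emeasure lborel ((\<lambda>y. h f + s * y) -` (Pair f -` A) \<inter> space lborel)"
      using \<open>Pair f -` A \<in> sets borel\<close> by (intro emeasure_distr) auto
    also have "(\<lambda>y. h f + s * y) -` (Pair f -` A) \<inter> space lborel = Pair f -` (?S -` A \<inter> space ?Q)"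
      using f by (auto simp: space_pair_measure add.commute)
    finally show ?thesis by simp
  qed
  have "emeasure (distr ?Q ?Q ?S) A = emeasure ?Q (?S -` A \<inter> space ?Q)"
    by (rule emeasure_distr[OF S A])
  also have "\<dots> = (\<integral>\<^sup>+f. emeasure lborel (Pair f -` (?S -` A \<inter> space ?Q)) \<partial>N)"
    by (rule lborel.emeasure_pair_measure_alt[OF measurable_sets[OF S A]])
  also have "\<dots> = (\<integral>\<^sup>+f. emeasure lborel (Pair f -` A) \<partial>N)"
    by (rule nn_integral_cong) (rule fibre)
  also have "\<dots> = emeasure ?Q A"
    by (rule lborel.emeasure_pair_measure_alt[symmetric, OF A])
  finally show "emeasure (distr ?Q ?Q ?S) A = emeasure ?Q A" .
qed simp

text \<open>Through the insertion \<open>(f, y) \<mapsto> f(a := y)\<close>, the map \<open>F\<close> becomes the shear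
  \<open>(f, y) \<mapsto> (f, s * y + h f)\<close> followed by \<open>T\<close> on the first factor.\<close>
lemma distr_lborel_Pi_insert_shear:
  fixes I :: "'i set" and s :: real
  assumes fin: "finite I" and a: "a \<notin> I"
    and T[measurable]: "T \<in> measurable (lborel_Pi I) (lborel_Pi I)"
    and T_preserving: "distr (lborel_Pi I) (lborel_Pi I) T = lborel_Pi I"
    and h[measurable]: "h \<in> borel_measurable (lborel_Pi I)" and s: "\<bar>s\<bar> = 1"
  defines "F \<equiv> \<lambda>x. (T (restrict x I))(a := s * x a + h (restrict x I))"
  shows "F \<in> measurable (lborel_Pi (insert a I)) (lborel_Pi (insert a I))"
    and "distr (lborel_Pi (insert a I)) (lborel_Pi (insert a I)) F = lborel_Pi (insert a I)"
proof -
  let ?P = "lborel_Pi (insert a I)" and ?N = "lborel_Pi I"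
  let ?Q = "?N \<Otimes>\<^sub>M (lborel :: real measure)"
  let ?ins = "\<lambda>(f, y). f(a := y)"
  let ?shear = "\<lambda>(f, y). (f, s * y + h f)" and ?T1 = "\<lambda>(f, y :: real). (T f, y)"
  interpret N: sigma_finite_measure ?N by (rule sigma_finite_lborel_Pi[OF fin])
  have [measurable]: "(\<lambda>x. restrict x I) \<in> measurable ?P ?N"
    by (rule measurable_restrict_subset) auto
  have F: "F \<in> measurable ?P ?P"
    unfolding F_def by (rule measurable_fun_upd[where J=I]) auto
  have ins: "?ins \<in> measurable ?Q ?P" by (rule measurable_add_dim)
  have shear: "?shear \<in> measurable ?Q ?Q" and T1: "?T1 \<in> measurable ?Q ?Q" by measurable
  have "distr ?Q ?Q ?T1 = distr ?N ?N T \<Otimes>\<^sub>M distr lborel lborel (\<lambda>y. y)"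
    by (rule pair_measure_distr[symmetric]) (auto simp: lborel.sigma_finite_measure_axioms)
  then have T1_preserving: "distr ?Q ?Q ?T1 = ?Q" by (simp add: T_preserving)
  have "distr ?Q ?Q (?T1 \<circ> ?shear) = distr (distr ?Q ?Q ?shear) ?Q ?T1"
    by (rule distr_distr[symmetric, OF T1 shear])
  also have "\<dots> = ?Q"
    using distr_pair_lborel_shear[OF N.sigma_finite_measure_axioms h s] T1_preserving by simp
  finally have preserving: "distr ?Q ?Q (?T1 \<circ> ?shear) = ?Q" .
  have commute: "(F \<circ> ?ins) w = (?ins \<circ> (?T1 \<circ> ?shear)) w" if w: "w \<in> space ?Q" for w
  proof -
    obtain f y where fy: "w = (f, y)" and f: "f \<in> PiE I (\<lambda>_. UNIV)"
      using w by (auto simp: space_pair_measure space_PiM)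
    have "restrict (f(a := y)) I = f"
      using a f by simp
    then show ?thesis by (simp add: fy F_def)
  qed
  have "distr ?P ?P F = distr (distr ?Q ?P ?ins) ?P F"
    by (simp add: distr_lborel_Pi_insert[OF fin a])
  also have "\<dots> = distr ?Q ?P (F \<circ> ?ins)"
    by (rule distr_distr[OF F ins])
  also have "\<dots> = distr ?Q ?P (?ins \<circ> (?T1 \<circ> ?shear))"
    by (rule distr_cong) (use commute in auto)
  also have "\<dots> = distr (distr ?Q ?Q (?T1 \<circ> ?shear)) ?P ?ins"
    by (rule distr_distr[symmetric, OF ins measurable_comp[OF shear T1]])
  also have "\<dots> = ?P"
    unfolding preserving by (rule distr_lborel_Pi_insert[OF fin a])
  finally show "distr ?P ?P F = ?P" .
  show "F \<in> measurable ?P ?P" by (fact F)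
qed

text \<open>Induction on \<open>I\<close>, peeling off the coordinate of highest rank, which enters no other coordinate.\<close>
lemma distr_lborel_Pi_triangular:
  fixes I :: "'i set" and rank :: "'i \<Rightarrow> nat" and s :: "'i \<Rightarrow> real"
    and h :: "'i \<Rightarrow> ('i \<Rightarrow> real) \<Rightarrow> real"
  assumes "finite I" and "inj_on rank I" and "\<And>k. k \<in> I \<Longrightarrow> \<bar>s k\<bar> = 1"
    and "\<And>k. k \<in> I \<Longrightarrow> h k \<in> borel_measurable (lborel_Pi {j \<in> I. rank j < rank k})"
  defines "T \<equiv> \<lambda>x. restrict (\<lambda>k. s k * x k + h k (restrict x {j \<in> I. rank j < rank k})) I"
  shows "T \<in> measurable (lborel_Pi I) (lborel_Pi I)"
    and "distr (lborel_Pi I) (lborel_Pi I) T = lborel_Pi I"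
proof -
  let ?T = "\<lambda>I x. restrict (\<lambda>k. s k * x k + h k (restrict x {j \<in> I. rank j < rank k})) I"
  have "?T I \<in> measurable (lborel_Pi I) (lborel_Pi I) \<and> distr (lborel_Pi I) (lborel_Pi I) (?T I) = lborel_Pi I"
    using assms(1-4)
  proof (induction I rule: finite_ranking_induct[where f = rank])
    case empty
    have id: "?T {} x = x" if "x \<in> space (lborel_Pi {})" for x
      using that by (simp add: PiM_empty restrict_def)
    have meas: "?T {} \<in> measurable (lborel_Pi {}) (lborel_Pi {})"
      using measurable_cong[of "lborel_Pi {}" "?T {}" "\<lambda>x. x"] id by simp
    have "distr (lborel_Pi {}) (lborel_Pi {}) (?T {}) = distr (lborel_Pi {}) (lborel_Pi {}) (\<lambda>x. x)"
      using distr_cong[of "lborel_Pi {}" _ "lborel_Pi {}" _ "?T {}" "\<lambda>x. x"] id by simp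
    also have "\<dots> = lborel_Pi {}" by (rule distr_id)
    finally show ?case using meas by blast
  next
    case (insert a S)
    show ?case
    proof (cases "a \<in> S")
      case True
      then show ?thesis using insert by (simp add: insert_absorb)
    next
      case False
      have lower: "rank j < rank a" if "j \<in> S" for j
        using insert.hyps(2)[OF that] insert.prems(1) that False
        by (metis le_neq_implies_less inj_on_contraD insertCI)
      have below_a: "{j \<in> insert a S. rank j < rank a} = S"
        using lower by auto
      have below_k: "{j \<in> insert a S. rank j < rank k} = {j \<in> S. rank j < rank k}" if "k \<in> S" for k
        using lower[OF that] by auto
      have IH: "?T S \<in> measurable (lborel_Pi S) (lborel_Pi S)
          \<and> distr (lborel_Pi S) (lborel_Pi S) (?T S) = lborel_Pi S"
      proof (rule insert.IH)
        show "inj_on rank S" using insert.prems(1) by simp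
        show "\<bar>s k\<bar> = 1" if "k \<in> S" for k using insert.prems(2) that by simp
        show "h k \<in> borel_measurable (lborel_Pi {j \<in> S. rank j < rank k})" if "k \<in> S" for k
          using insert.prems(3)[of k] that below_k[OF that] by simp
      qed
      have h_a: "h a \<in> borel_measurable (lborel_Pi S)"
        using insert.prems(3)[of a] unfolding below_a by simp
      have eq: "?T (insert a S) = (\<lambda>x. (?T S (restrict x S))(a := s a * x a + h a (restrict x S)))"
      proof (intro ext)
        fix x k
        show "?T (insert a S) x k = ((?T S (restrict x S))(a := s a * x a + h a (restrict x S))) k"
          using False below_a below_k[of k] by (auto simp: Int_absorb1)
      qed
      show ?thesis
        using distr_lborel_Pi_insert_shear[OF insert.hyps(1) False IH[THEN conjunct1] IH[THEN conjunct2]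
            h_a insert.prems(2)[OF insertI1]]
        unfolding eq by blast
    qed
  qed
  then show "T \<in> measurable (lborel_Pi I) (lborel_Pi I)"
    and "distr (lborel_Pi I) (lborel_Pi I) T = lborel_Pi I"
    unfolding T_def by auto
qed

definition gaps_to_chamber :: "nat \<Rightarrow> nat \<Rightarrow> (nat \<Rightarrow> real) \<Rightarrow> nat \<Rightarrow> real" where
  "gaps_to_chamber m p v =
     restrict (\<lambda>k. if k \<le> p then \<Sum>i\<in>{k..p}. v i else - (\<Sum>i\<in>{Suc p..k}. v i)) {1..m}"

text \<open>Coordinates \<open>k \<le> p\<close> depend on the later ones up to \<open>p\<close>, those \<open>k > p\<close> on the earlier ones
  from \<open>p + 1\<close>: the map is triangular for the ranking \<open>p - 1, \<dots>, 0, p + 1, \<dots>, m\<close> of \<open>1, \<dots>, m\<close>.\<close>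
lemma gaps_to_chamber_measure_preserving:
  assumes "p \<le> m"
  shows "gaps_to_chamber m p \<in> measurable (leb_m m) (leb_m m)"
    and "distr (leb_m m) (leb_m m) (gaps_to_chamber m p) = leb_m m"
proof -
  define rank :: "nat \<Rightarrow> nat" where "rank k = (if k \<le> p then p - k else k)" for k
  define s :: "nat \<Rightarrow> real" where "s k = (if k \<le> p then 1 else -1)" for k
  define h :: "nat \<Rightarrow> (nat \<Rightarrow> real) \<Rightarrow> real" where
    "h k y = (if k \<le> p then \<Sum>i\<in>{Suc k..p}. y i else - (\<Sum>i\<in>{Suc p..<k}. y i))" for k y
  define below where "below k = {j \<in> {1..m}. rank j < rank k}" for k
  have range_below: "(if k \<le> p then {Suc k..p} else {Suc p..<k}) \<subseteq> below k" if "k \<in> {1..m}" for k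
    using that assms by (auto simp: below_def rank_def)
  have "gaps_to_chamber m p x = restrict (\<lambda>k. s k * x k + h k (restrict x (below k))) {1..m}" for x
    unfolding gaps_to_chamber_def
  proof (rule restrict_ext)
    fix k assume k: "k \<in> {1..m}"
    have "h k (restrict x (below k)) = h k x"
      using range_below[OF k] unfolding h_def by (auto intro!: sum.cong)
    moreover have "(\<Sum>i\<in>{k..p}. x i) = x k + (\<Sum>i\<in>{Suc k..p}. x i)" if "k \<le> p"
      using that by (simp add: sum.atLeast_Suc_atMost)
    moreover have "(\<Sum>i\<in>{Suc p..k}. x i) = x k + (\<Sum>i\<in>{Suc p..<k}. x i)" if "\<not> k \<le> p"
      using that by (simp add: atLeastLessThanSuc_atLeastAtMost[symmetric] add.commute)
    ultimately show "(if k \<le> p then \<Sum>i\<in>{k..p}. x i else - (\<Sum>i\<in>{Suc p..k}. x i))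
        = s k * x k + h k (restrict x (below k))"
      by (auto simp: s_def h_def)
  qed
  then have eq: "gaps_to_chamber m p = (\<lambda>x. restrict (\<lambda>k. s k * x k + h k (restrict x (below k))) {1..m})"
    by blast
  have "inj_on rank {1..m}"
    by (auto simp: inj_on_def rank_def split: if_splits)
  moreover have "\<bar>s k\<bar> = 1" for k
    by (simp add: s_def)
  moreover have "h k \<in> borel_measurable (lborel_Pi (below k))" if "k \<in> {1..m}" for k
  proof -
    have component: "(\<lambda>y. y i) \<in> borel_measurable (lborel_Pi (below k))" if "i \<in> below k" for i
      using that by (auto intro!: measurable_component_singleton[where M = "\<lambda>_. lborel", simplified])
    show ?thesis
    proof (cases "k \<le> p")
      case True
      then have "h k = (\<lambda>y. \<Sum>i\<in>{Suc k..p}. y i)" by (intro ext) (simp add: h_def)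
      then show ?thesis
        using range_below[OF that] True by (auto intro!: borel_measurable_sum component)
    next
      case False
      then have "h k = (\<lambda>y. - (\<Sum>i\<in>{Suc p..<k}. y i))" by (intro ext) (simp add: h_def)
      then show ?thesis
        using range_below[OF that] False
        by (auto intro!: borel_measurable_uminus borel_measurable_sum component)
    qed
  qed
  ultimately show "gaps_to_chamber m p \<in> measurable (leb_m m) (leb_m m)"
    and "distr (leb_m m) (leb_m m) (gaps_to_chamber m p) = leb_m m"
    using distr_lborel_Pi_triangular[of "{1..m}" rank s h] unfolding eq leb_m_def below_def by auto
qed

lemma sum_atLeastAtMost_split:
  fixes f :: "nat \<Rightarrow> 'a::comm_monoid_add"
  assumes "a \<le> Suc c" "c \<le> b"
  shows "sum f {a..b} = sum f {a..c} + sum f {Suc c..b}"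
proof -
  have "{a..b} = {a..c} \<union> {Suc c..b}" using assms by auto
  then show ?thesis by (simp add: sum.union_disjoint ivl_disj_int)
qed

text \<open>The points \<open>\<lambda>\<^sub>1 > \<dots> > \<lambda>\<^sub>p > 0 > \<lambda>\<^sub>p\<^sub>+\<^sub>1 > \<dots> > \<lambda>\<^sub>m\<close> listed in decreasing order are
  \<open>gap_nodes m p v 0 > \<dots> > gap_nodes m p v m\<close>, with \<open>0\<close> at position \<open>p\<close>; \<open>node_perm p\<close>
  sends the index of each point in the list \<open>0, \<lambda>\<^sub>1, \<dots>, \<lambda>\<^sub>m\<close> to its position.\<close>
definition gap_nodes :: "nat \<Rightarrow> nat \<Rightarrow> (nat \<Rightarrow> real) \<Rightarrow> nat \<Rightarrow> real" where
  "gap_nodes m p v k = (\<Sum>i\<in>{Suc k..m}. v i) - (\<Sum>i\<in>{Suc p..m}. v i)"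

definition node_perm :: "nat \<Rightarrow> nat \<Rightarrow> nat" where
  "node_perm p k = (if k = 0 then p else if k \<le> p then k - 1 else k)"

lemma gap_nodes_diff:
  assumes "k \<le> l" "l \<le> m"
  shows "gap_nodes m p v k - gap_nodes m p v l = (\<Sum>i\<in>{Suc k..l}. v i)"
  using sum_atLeastAtMost_split[of "Suc k" l m v] assms by (simp add: gap_nodes_def)

lemma gap_nodes_self [simp]: "gap_nodes m p v p = 0"
  by (simp add: gap_nodes_def)

lemma gap_nodes_strict_antimono:
  assumes "\<forall>i\<in>{1..m}. 0 < v i" "k < l" "l \<le> m"
  shows "gap_nodes m p v l < gap_nodes m p v k"
proof -
  have "0 < (\<Sum>i\<in>{Suc k..l}. v i)"
    by (rule sum_pos) (use assms in auto)
  then show ?thesis using gap_nodes_diff[of k l m p v] assms by simp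
qed

lemma gaps_to_chamber_eq_gap_nodes:
  assumes "p \<le> m" "k \<in> {1..m}"
  shows "gaps_to_chamber m p v k = gap_nodes m p v (node_perm p k)"
proof (cases "k \<le> p")
  case True
  then show ?thesis
    using sum_atLeastAtMost_split[of k p m v] assms
    by (simp add: gaps_to_chamber_def gap_nodes_def node_perm_def)
next
  case False
  then show ?thesis
    using sum_atLeastAtMost_split[of "Suc p" k m v] assms
    by (simp add: gaps_to_chamber_def gap_nodes_def node_perm_def)
qed

lemma node_perm_strict_mono: "1 \<le> i \<Longrightarrow> i < j \<Longrightarrow> node_perm p i < node_perm p j"
  by (auto simp: node_perm_def)

lemma bij_betw_node_perm:
  assumes "p \<le> m"
  shows "bij_betw (node_perm p) {0..m} {0..m}"
proof (rule bij_betw_imageI)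
  show "inj_on (node_perm p) {0..m}"
    by (auto simp: inj_on_def node_perm_def split: if_splits)
  have "k \<in> node_perm p ` {0..m}" if "k \<le> m" for k
  proof -
    consider "k = p" | "k < p" | "p < k" by linarith
    then show ?thesis
    proof cases
      case 1 then show ?thesis by (intro image_eqI[of _ _ 0]) (auto simp: node_perm_def)
    next
      case 2 then show ?thesis using assms by (intro image_eqI[of _ _ "Suc k"]) (auto simp: node_perm_def)
    next
      case 3 then show ?thesis using that by (intro image_eqI[of _ _ k]) (auto simp: node_perm_def)
    qed
  qed
  moreover have "node_perm p ` {0..m} \<subseteq> {0..m}"
    using assms by (auto simp: node_perm_def)
  ultimately show "node_perm p ` {0..m} = {0..m}"
    by auto
qed

lemma gaps_to_chamber_in_Ychamber_iff:
  assumes pm: "p \<le> m" and v: "v \<in> PiE {1..m} (\<lambda>_. UNIV)"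
  shows "gaps_to_chamber m p v \<in> Ychamber m p \<longleftrightarrow> v \<in> PiE {1..m} (\<lambda>_. {0<..})"
proof
  let ?l = "gaps_to_chamber m p v" and ?X = "gap_nodes m p v"
  have l: "?l k = ?X (node_perm p k)" if "k \<in> {1..m}" for k
    using gaps_to_chamber_eq_gap_nodes[OF pm that] .
  show "v \<in> PiE {1..m} (\<lambda>_. {0<..})" if Y: "?l \<in> Ychamber m p"
  proof -
    from Y have decr: "\<And>i. 1 \<le> i \<Longrightarrow> i < m \<Longrightarrow> ?l (Suc i) < ?l i"
      and pos: "\<And>i. 1 \<le> i \<Longrightarrow> i \<le> p \<Longrightarrow> 0 < ?l i"
      and neg: "\<And>i. p < i \<Longrightarrow> i \<le> m \<Longrightarrow> ?l i < 0"
      unfolding Ychamber_def by auto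
    have nodes_decr: "?X k < ?X (k - 1)" if k: "k \<in> {1..m}" for k
    proof -
      consider "k < p" | "k = p" | "k = Suc p" | "Suc p < k" by linarith
      then show ?thesis
      proof cases
        case 1
        then show ?thesis using decr[of k] l[of k] l[of "Suc k"] k pm by (simp add: node_perm_def)
      next
        case 2
        then show ?thesis using pos[of k] l[of k] k by (simp add: node_perm_def)
      next
        case 3
        then show ?thesis using neg[of k] l[of k] k by (simp add: node_perm_def)
      next
        case 4
        then have "node_perm p (k - 1) = k - 1" "node_perm p k = k"
          by (auto simp: node_perm_def)
        then show ?thesis using decr[of "k - 1"] l[of k] l[of "k - 1"] k 4 by simp
      qed
    qed
    have "0 < v k" if k: "k \<in> {1..m}" for k
      using nodes_decr[OF k] gap_nodes_diff[of "k - 1" k m p v] k by simp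
    then show ?thesis using v by (auto simp: PiE_iff)
  qed
  show "?l \<in> Ychamber m p" if pos: "v \<in> PiE {1..m} (\<lambda>_. {0<..})"
  proof -
    have decr: "?X l < ?X k" if "k < l" "l \<le> m" for k l
      using gap_nodes_strict_antimono[of m v k l p] pos that by (auto simp: PiE_iff)
    have "?l (Suc i) < ?l i" if "1 \<le> i" "i < m" for i
      using l[of i] l[of "Suc i"] that decr node_perm_strict_mono[of i "Suc i" p]
      by (auto simp: node_perm_def)
    moreover have "0 < ?l i" if "1 \<le> i" "i \<le> p" for i
      using l[of i] that pm decr[of "i - 1" p] by (simp add: node_perm_def)
    moreover have "?l i < 0" if "p < i" "i \<le> m" for i
      using l[of i] that decr[of p i] by (simp add: node_perm_def)
    ultimately show ?thesis
      unfolding Ychamber_def by (auto simp: gaps_to_chamber_def)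
  qed
qed

definition pair_dist_prod :: "('a::linorder \<Rightarrow> real) \<Rightarrow> 'a set \<Rightarrow> real" where
  "pair_dist_prod w S = (\<Prod>i\<in>S. \<Prod>j\<in>{j\<in>S. i < j}. \<bar>w i - w j\<bar>)"

lemma pair_dist_prod_squared:
  assumes "finite S"
  shows "(pair_dist_prod w S)\<^sup>2 = (\<Prod>i\<in>S. \<Prod>j\<in>S - {i}. \<bar>w i - w j\<bar>)"
proof -
  have split: "S - {i} = {j\<in>S. j < i} \<union> {j\<in>S. i < j}" for i by auto
  have "(\<Prod>i\<in>S. \<Prod>j\<in>S - {i}. \<bar>w i - w j\<bar>)
      = (\<Prod>i\<in>S. \<Prod>j\<in>{j\<in>S. j < i}. \<bar>w i - w j\<bar>) * pair_dist_prod w S"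
    unfolding split pair_dist_prod_def prod.distrib[symmetric]
    using assms by (intro prod.cong refl prod.union_disjoint) auto
  also have "(\<Prod>i\<in>S. \<Prod>j\<in>{j\<in>S. j < i}. \<bar>w i - w j\<bar>) = (\<Prod>j\<in>S. \<Prod>i\<in>{i\<in>S. j < i}. \<bar>w i - w j\<bar>)"
    by (rule prod.swap_restrict[OF assms assms])
  also have "\<dots> = pair_dist_prod w S"
    unfolding pair_dist_prod_def by (intro prod.cong refl) (simp add: abs_minus_commute)
  finally show ?thesis by (simp add: power2_eq_square)
qed

text \<open>Both sides are nonnegative with equal squares, and the square is a product over
  ordered pairs, which is insensitive to the order of the index set.\<close>
lemma pair_dist_prod_reindex:
  fixes t :: "'b::linorder \<Rightarrow> 'a::linorder"
  assumes fin: "finite S" and inj: "inj_on t S"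
  shows "pair_dist_prod (\<lambda>k. w (t k)) S = pair_dist_prod w (t ` S)"
proof -
  have "(\<Prod>i\<in>t ` S. \<Prod>j\<in>t ` S - {i}. \<bar>w i - w j\<bar>) = (\<Prod>i\<in>S. \<Prod>j\<in>t ` S - {t i}. \<bar>w (t i) - w j\<bar>)"
    by (rule prod.reindex_cong[OF inj refl]) simp
  also have "\<dots> = (\<Prod>i\<in>S. \<Prod>j\<in>S - {i}. \<bar>w (t i) - w (t j)\<bar>)"
  proof (rule prod.cong[OF refl])
    fix i assume i: "i \<in> S"
    have "t ` S - {t i} = t ` (S - {i})" using inj i by (auto simp: inj_on_def)
    moreover have "inj_on t (S - {i})" using inj by (rule inj_on_subset) auto
    ultimately show "(\<Prod>j\<in>t ` S - {t i}. \<bar>w (t i) - w j\<bar>) = (\<Prod>j\<in>S - {i}. \<bar>w (t i) - w (t j)\<bar>)"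
      by (simp add: prod.reindex)
  qed
  finally have "(pair_dist_prod (\<lambda>k. w (t k)) S)\<^sup>2 = (pair_dist_prod w (t ` S))\<^sup>2"
    using fin by (simp add: pair_dist_prod_squared)
  then show ?thesis
    by (simp add: pair_dist_prod_def prod_nonneg)
qed

lemma pair_dist_prod_atLeast0AtMost:
  "pair_dist_prod z {0..m} = (\<Prod>j\<in>{1..m}. \<bar>z 0 - z j\<bar>) * \<bar>vdm m z\<bar>"
proof -
  have "{0..m} = insert 0 {1..m}" by auto
  then have "pair_dist_prod z {0..m}
      = (\<Prod>j\<in>{j\<in>{0..m}. 0 < j}. \<bar>z 0 - z j\<bar>) * (\<Prod>i\<in>{1..m}. \<Prod>j\<in>{j\<in>{0..m}. i < j}. \<bar>z i - z j\<bar>)"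
    unfolding pair_dist_prod_def by simp
  also have "{j\<in>{0..m}. 0 < j} = {1..m}" by auto
  also have "(\<Prod>i\<in>{1..m}. \<Prod>j\<in>{j\<in>{0..m}. i < j}. \<bar>z i - z j\<bar>) = \<bar>vdm m z\<bar>"
    unfolding vdm_def abs_prod by (intro prod.cong refl) auto
  finally show ?thesis .
qed

lemma abs_prod_times_vdm_gaps_to_chamber:
  assumes pm: "p \<le> m" and pos: "\<forall>i\<in>{1..m}. 0 < v i"
  shows "\<bar>\<Prod>j\<in>{1..m}. gaps_to_chamber m p v j\<bar> * vdm m (gaps_to_chamber m p v)
    = (\<Prod>i\<in>{1..m}. \<Prod>j\<in>{i..m}. \<Sum>k\<in>{i..j}. v k)"
proof -
  let ?l = "gaps_to_chamber m p v" and ?X = "gap_nodes m p v"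
  define z where "z k = (if k = 0 then 0 else ?l k)" for k
  have z_nodes: "z k = ?X (node_perm p k)" if "k \<in> {0..m}" for k
    using gaps_to_chamber_eq_gap_nodes[OF pm, of k v] that by (simp add: z_def node_perm_def)
  have "0 < vdm m ?l"
  proof -
    have "?X (node_perm p j) < ?X (node_perm p i)" if "1 \<le> i" "i < j" "j \<le> m" for i j
      using that pm pos by (intro gap_nodes_strict_antimono node_perm_strict_mono) (auto simp: node_perm_def)
    then show ?thesis
      unfolding vdm_def by (intro prod_pos) (auto simp: gaps_to_chamber_eq_gap_nodes[OF pm])
  qed
  moreover have "vdm m z = vdm m ?l"
    unfolding vdm_def by (intro prod.cong refl) (auto simp: z_def)
  ultimately have "\<bar>\<Prod>j\<in>{1..m}. ?l j\<bar> * vdm m ?l = pair_dist_prod z {0..m}"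
    by (simp add: pair_dist_prod_atLeast0AtMost z_def abs_prod)
  also have "\<dots> = pair_dist_prod (\<lambda>k. ?X (node_perm p k)) {0..m}"
    unfolding pair_dist_prod_def by (intro prod.cong refl) (auto simp: z_nodes)
  also have "\<dots> = pair_dist_prod ?X {0..m}"
    using bij_betw_node_perm[OF pm] by (simp add: pair_dist_prod_reindex bij_betw_def)
  also have "\<dots> = (\<Prod>i\<in>{0..m}. \<Prod>j\<in>{Suc i..m}. \<Sum>k\<in>{Suc i..j}. v k)"
    unfolding pair_dist_prod_def
  proof (intro prod.cong)
    fix i j assume "i \<in> {0..m}" "j \<in> {Suc i..m}"
    moreover have "0 \<le> (\<Sum>k\<in>{Suc i..j}. v k)"
      using pos \<open>j \<in> {Suc i..m}\<close> by (intro sum_nonneg) (auto simp: less_imp_le)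
    ultimately show "\<bar>?X i - ?X j\<bar> = (\<Sum>k\<in>{Suc i..j}. v k)"
      using gap_nodes_diff[of i j m p v] by auto
  qed auto
  also have "\<dots> = (\<Prod>i\<in>{1..Suc m}. \<Prod>j\<in>{i..m}. \<Sum>k\<in>{i..j}. v k)"
    by (simp only: prod.shift_bounds_cl_Suc_ivl One_nat_def)
  also have "\<dots> = (\<Prod>i\<in>{1..m}. \<Prod>j\<in>{i..m}. \<Sum>k\<in>{i..j}. v k)"
    by simp
  finally show ?thesis .
qed

lemma sum_tail_sums:
  "(\<Sum>k\<in>{0..m}. \<Sum>i\<in>{Suc k..m}. v i) = (\<Sum>i\<in>{1..m}. of_nat i * v i :: 'a::comm_semiring_1)"
proof (induction m)
  case (Suc m)
  have "(\<Sum>k\<in>{0..Suc m}. \<Sum>i\<in>{Suc k..Suc m}. v i) = (\<Sum>k\<in>{0..m}. (\<Sum>i\<in>{Suc k..m}. v i) + v (Suc m))"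
    by (simp add: sum.atLeast0_atMost_Suc sum.cl_ivl_Suc)
  also have "\<dots> = (\<Sum>i\<in>{1..Suc m}. of_nat i * v i)"
    by (simp add: sum.distrib Suc.IH sum.cl_ivl_Suc)
  finally show ?case .
qed simp

lemma sum_gaps_to_chamber:
  assumes pm: "p \<le> m"
  shows "(\<Sum>j\<in>{1..m}. gaps_to_chamber m p v j)
    = (\<Sum>i\<in>{1..m}. real i * v i) - real (Suc m) * (\<Sum>i\<in>{Suc p..m}. v i)"
proof -
  let ?X = "gap_nodes m p v"
  have "{0..m} = insert 0 {1..m}" by auto
  then have "(\<Sum>k\<in>{0..m}. ?X (node_perm p k)) = (\<Sum>j\<in>{1..m}. gaps_to_chamber m p v j)"
    by (simp add: node_perm_def gaps_to_chamber_eq_gap_nodes[OF pm])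
  moreover have "(\<Sum>k\<in>{0..m}. ?X (node_perm p k)) = (\<Sum>k\<in>{0..m}. ?X k)"
    by (rule sum.reindex_bij_betw[OF bij_betw_node_perm[OF pm]])
  moreover have "(\<Sum>k\<in>{0..m}. ?X k)
      = (\<Sum>i\<in>{1..m}. real i * v i) - real (Suc m) * (\<Sum>i\<in>{Suc p..m}. v i)"
    by (simp add: gap_nodes_def sum_subtractf sum_tail_sums)
  ultimately show ?thesis by simp
qed

lemma exp_gaps_to_chamber:
  assumes m: "1 \<le> m" and pm: "p \<le> m"
  shows "exp (- (\<Sum>j\<in>{1..m-1}. gaps_to_chamber m p v j)) * Gfun c p m (gaps_to_chamber m p v m)
    = exp (- (\<Sum>j\<in>{1..p}. real j * v j) - (\<Sum>j\<in>{p+1..m}. (real j + c) * v j))"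
proof -
  let ?l = "gaps_to_chamber m p v"
  define Y where "Y = (\<Sum>i\<in>{Suc p..m}. v i)"
  have weighted: "(\<Sum>i\<in>{1..m}. real i * v i) = (\<Sum>j\<in>{1..p}. real j * v j) + (\<Sum>j\<in>{Suc p..m}. real j * v j)"
    using pm by (intro sum_atLeastAtMost_split) auto
  have shifted: "(\<Sum>j\<in>{p+1..m}. (real j + c) * v j) = (\<Sum>j\<in>{Suc p..m}. real j * v j) + c * Y"
    by (simp add: Y_def algebra_simps sum.distrib sum_distrib_left)
  have "(\<Sum>j\<in>{1..m}. ?l j) = (\<Sum>j\<in>{1..m-1}. ?l j) + ?l m"
    using m by (cases m) (simp_all add: sum.cl_ivl_Suc)
  then have sum: "(\<Sum>j\<in>{1..m-1}. ?l j) = (\<Sum>i\<in>{1..m}. real i * v i) - real (Suc m) * Y - ?l m"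
    using sum_gaps_to_chamber[OF pm, of v] by (simp add: Y_def)
  show ?thesis
  proof (cases "p < m")
    case True
    then have "?l m = - Y"
      using m by (simp add: gaps_to_chamber_def Y_def)
    then have "- (\<Sum>j\<in>{1..m-1}. ?l j) + (real m + c) * ?l m
        = - (\<Sum>j\<in>{1..p}. real j * v j) - (\<Sum>j\<in>{p+1..m}. (real j + c) * v j)"
      unfolding sum weighted shifted by (simp add: algebra_simps)
    then show ?thesis
      using True by (simp add: Gfun_def exp_add[symmetric])
  next
    case False
    then have "p = m" "Y = 0" using pm by (simp_all add: Y_def)
    then have "- (\<Sum>j\<in>{1..m-1}. ?l j) - ?l m
        = - (\<Sum>j\<in>{1..p}. real j * v j) - (\<Sum>j\<in>{p+1..m}. (real j + c) * v j)"
      unfolding sum weighted shifted by simp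
    then show ?thesis
      using False by (simp add: Gfun_def exp_add[symmetric] exp_diff)
  qed
qed

lemma set_integral_measure_preserving:
  fixes f :: "'a \<Rightarrow> real"
  assumes T: "T \<in> measurable M M" and preserving: "distr M M T = M"
    and A: "A \<in> sets M" and f: "f \<in> borel_measurable M"
  shows "(LINT x:A|M. f x) = (LINT x:T -` A \<inter> space M|M. f (T x))"
proof -
  have "(LINT x:A|M. f x) = integral\<^sup>L (distr M M T) (\<lambda>x. indicator A x *\<^sub>R f x)"
    unfolding set_lebesgue_integral_def preserving ..
  also have "\<dots> = integral\<^sup>L M (\<lambda>x. indicator A (T x) *\<^sub>R f (T x))"
    using A f by (intro integral_distr[OF T] borel_measurable_scaleR borel_measurable_indicator)
  also have "\<dots> = (LINT x:T -` A \<inter> space M|M. f (T x))"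
    unfolding set_lebesgue_integral_def
    by (intro Bochner_Integration.integral_cong) (auto simp: indicator_def)
  finally show ?thesis .
qed

lemma measurable_leb_m_component:
  "i \<in> {1..m} \<Longrightarrow> (\<lambda>l. l i) \<in> borel_measurable (leb_m m)"
  using measurable_component_singleton[of i "{1..m}" "\<lambda>_. lborel"] by (simp add: leb_m_def)

lemma Ychamber_in_sets:
  assumes "p \<le> m"
  shows "Ychamber m p \<in> sets (leb_m m)"
proof -
  have "Measurable.pred (leb_m m)
      (\<lambda>l. (\<forall>i\<in>{1..<m}. l (Suc i) < l i) \<and> (\<forall>i\<in>{1..p}. 0 < l i) \<and> (\<forall>i\<in>{p<..m}. l i < 0))"
    using assms
    by (intro pred_intros_logic pred_intros_finite borel_measurable_pred_less measurable_leb_m_component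
        borel_measurable_const) auto
  moreover have "Ychamber m p = {l \<in> space (leb_m m).
      (\<forall>i\<in>{1..<m}. l (Suc i) < l i) \<and> (\<forall>i\<in>{1..p}. 0 < l i) \<and> (\<forall>i\<in>{p<..m}. l i < 0)}"
    using assms unfolding Ychamber_def leb_m_def space_PiM by auto
  ultimately show ?thesis by (simp add: pred_def)
qed

lemma borel_measurable_Pcp_integrand:
  assumes "1 \<le> m"
  shows "(\<lambda>l. \<bar>\<Prod>j\<in>{1..m}. l j\<bar> * vdm m l * exp (- (\<Sum>j\<in>{1..m-1}. l j)) * Gfun c p m (l m))
    \<in> borel_measurable (leb_m m)"
proof -
  note component = measurable_leb_m_component
  have [measurable]: "(\<lambda>l. l m) \<in> borel_measurable (leb_m m)"
    using assms by (intro component) auto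
  have [measurable]: "(\<lambda>l. \<Sum>j\<in>{1..m-1}. l j) \<in> borel_measurable (leb_m m)"
    and [measurable]: "(\<lambda>l. \<Prod>j\<in>{1..m}. l j) \<in> borel_measurable (leb_m m)"
    and [measurable]: "vdm m \<in> borel_measurable (leb_m m)"
    unfolding vdm_def
    by (intro borel_measurable_sum borel_measurable_prod borel_measurable_diff component; force)+
  show ?thesis
    unfolding Gfun_def by measurable
qed

theorem mainTheorem7:
  fixes m p :: nat and c :: real
  assumes "1 \<le> m" and "p \<le> m" and "0 \<le> c"
  shows "Pcp c p m =
    (LINT l : PiE {1..m} (\<lambda>_. {0<..}) | leb_m m.
       (\<Prod>i\<in>{1..m}. \<Prod>j\<in>{i..m}. \<Sum>k\<in>{i..j}. l k) *
       exp (- (\<Sum>j\<in>{1..p}. real j * l j) - (\<Sum>j\<in>{p+1..m}. (real j + c) * l j)))"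
proof -
  let ?T = "gaps_to_chamber m p" and ?B = "PiE {1..m} (\<lambda>_. {0<..}) :: (nat \<Rightarrow> real) set"
  let ?F = "\<lambda>l. \<bar>\<Prod>j\<in>{1..m}. l j\<bar> * vdm m l * exp (- (\<Sum>j\<in>{1..m-1}. l j)) * Gfun c p m (l m)"
  let ?G = "\<lambda>l. (\<Prod>i\<in>{1..m}. \<Prod>j\<in>{i..m}. \<Sum>k\<in>{i..j}. l k) *
    exp (- (\<Sum>j\<in>{1..p}. real j * l j) - (\<Sum>j\<in>{p+1..m}. (real j + c) * l j))"
  note preserving = gaps_to_chamber_measure_preserving[OF assms(2)]
  note Y_sets = Ychamber_in_sets[OF assms(2)]
  have preimage: "?T -` Ychamber m p \<inter> space (leb_m m) = ?B"
    using gaps_to_chamber_in_Ychamber_iff[OF assms(2)] PiE_mono[of "{1..m}" "\<lambda>_. {0<..}" "\<lambda>_. UNIV"]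
    by (auto simp: leb_m_def space_PiM)
  have "Pcp c p m = (LINT v:?B|leb_m m. ?F (?T v))"
    unfolding Pcp_def preimage[symmetric]
    by (rule set_integral_measure_preserving[OF preserving Y_sets borel_measurable_Pcp_integrand[OF assms(1)]])
  also have "\<dots> = (LINT v:?B|leb_m m. ?G v)"
  proof (rule set_lebesgue_integral_cong)
    show "?B \<in> sets (leb_m m)"
      using measurable_sets[OF preserving(1) Y_sets] by (simp only: preimage)
    show "\<forall>v. v \<in> ?B \<longrightarrow> ?F (?T v) = ?G v"
      using abs_prod_times_vdm_gaps_to_chamber[OF assms(2)] exp_gaps_to_chamber[OF assms(1,2)]
      by (auto simp: PiE_iff mult.assoc[symmetric])
  qed
  finally show ?thesis .
qed

end
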